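(* Let $Q$ be a fixed IPC formula and let $\phi : K \to L$ be the map defined in the context. Then for every IPC formula $Z \in L$, $\phi(Z) \equiv QQZ$, i.e. $\phi(Z) \vdash_L (Z \supset Q) \supset Q$ and $(Z \supset Q) \supset Q \vdash_L \phi(Z)$.
   Context: $K$ is the set of PC formulas: built from propositional variables and a propositional constant $\mathfrak{f}$ using only the conditional $\supset$. $L \subseteq K$ is the set of IPC formulas: built from propositional variables using only $\supset$. IPC has Modus Ponens as its only rule and axioms all instances (with IPC formulas) of $(\#1)\ A \supset (B \supset A)$; $(\#2)\ [A \supset (B \supset C)] \supset [(A \supset B) \supset (A \supset C)]$; $(\mathbb{P})\ [(A \supset B) \supset A] \supset A$. $\Gamma \vdash_L Y$ means there is a deduction of $Y$ from hypotheses $\Gamma$ in IPC; $X \equiv Y$ means $X \vdash_L Y$ and $Y \vdash_L X$. For an IPC formula $Z$ write $QZ := Z \supset Q$ and $QQZ := (Z \supset Q)\supset Q$. The map $\phi : K \to L$ is defined by induction on the number of conditionals: $\phi(\mathfrak{f}) = Q$; $\phi(p) = QQp = (p \supset Q) \supset Q$ for each propositional variable $p$; and $\phi(X \supset Y) = \phi(X) \supset \phi(Y)$. *)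

theory Defs
  imports Main
begin

text \<open>PC formulas (the set K): propositional variables, the constant f, and the conditional.\<close>
datatype 'v form = Var 'v | Falsum | Imp "'v form" "'v form" (infixr "\<supset>" 60)

fun is_ipc :: "'v form \<Rightarrow> bool" where
  "is_ipc (Var p) = True"
| "is_ipc Falsum = False"
| "is_ipc (A \<supset> B) = (is_ipc A \<and> is_ipc B)"

definition L :: "'v form set" where
  "L = {A. is_ipc A}"

inductive deriv :: "'v form set \<Rightarrow> 'v form \<Rightarrow> bool" (infix "\<turnstile>\<^sub>L" 50)
  for \<Gamma> :: "'v form set" where
  hyp: "A \<in> \<Gamma> \<Longrightarrow> \<Gamma> \<turnstile>\<^sub>L A"
| ax1: "A \<in> L \<Longrightarrow> B \<in> L \<Longrightarrow> \<Gamma> \<turnstile>\<^sub>L A \<supset> (B \<supset> A)"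
| ax2: "A \<in> L \<Longrightarrow> B \<in> L \<Longrightarrow> C \<in> L \<Longrightarrow>
        \<Gamma> \<turnstile>\<^sub>L (A \<supset> (B \<supset> C)) \<supset> ((A \<supset> B) \<supset> (A \<supset> C))"
| axP: "A \<in> L \<Longrightarrow> B \<in> L \<Longrightarrow> \<Gamma> \<turnstile>\<^sub>L ((A \<supset> B) \<supset> A) \<supset> A"
| mp: "\<Gamma> \<turnstile>\<^sub>L A \<Longrightarrow> \<Gamma> \<turnstile>\<^sub>L A \<supset> B \<Longrightarrow> \<Gamma> \<turnstile>\<^sub>L B"

fun phi :: "'v form \<Rightarrow> 'v form \<Rightarrow> 'v form" where
  "phi Q Falsum = Q"
| "phi Q (Var p) = (Var p \<supset> Q) \<supset> Q"
| "phi Q (X \<supset> Y) = phi Q X \<supset> phi Q Y"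

end

theory Submission
  imports Defs
begin

text \<open>Variables are translated to QQZ outright, the constant f does not
  occur in Z, and for a conditional X \<supset> Y the translation is phi X \<supset> phi Y, which is
  interderivable with QQX \<supset> QQY because interderivability is a congruence for \<supset>. So everything
  rests on QQ(X \<supset> Y) being interderivable with QQX \<supset> QQY; the direction from right to left
  is the classical one and uses Peirce's law.\<close>

lemma imp_in_L_iff [simp]: "A \<supset> B \<in> L \<longleftrightarrow> A \<in> L \<and> B \<in> L"
  by (simp add: L_def)

lemma Var_in_L [simp]: "Var p \<in> L"
  by (simp add: L_def)

lemma Falsum_notin_L [simp]: "Falsum \<notin> L"
  by (simp add: L_def)

lemma deriv_mono: "\<Gamma> \<turnstile>\<^sub>L A \<Longrightarrow> \<Gamma> \<subseteq> \<Delta> \<Longrightarrow> \<Delta> \<turnstile>\<^sub>L A"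
  by (induction rule: deriv.induct) (auto intro: deriv.intros)

lemma deriv_in_L: "\<Gamma> \<turnstile>\<^sub>L A \<Longrightarrow> \<Gamma> \<subseteq> L \<Longrightarrow> A \<in> L"
  by (induction rule: deriv.induct) auto

lemma deriv_imp_self: "A \<in> L \<Longrightarrow> \<Gamma> \<turnstile>\<^sub>L A \<supset> A"
  by (rule deriv.mp[OF deriv.ax1 deriv.mp[OF deriv.ax1 deriv.ax2]]) simp_all

lemma deriv_imp_weaken: "\<Gamma> \<turnstile>\<^sub>L C \<Longrightarrow> A \<in> L \<Longrightarrow> C \<in> L \<Longrightarrow> \<Gamma> \<turnstile>\<^sub>L A \<supset> C"
  by (erule deriv.mp) (rule deriv.ax1)

theorem deduction:
  assumes "insert A \<Gamma> \<turnstile>\<^sub>L B" and "insert A \<Gamma> \<subseteq> L"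
  shows "\<Gamma> \<turnstile>\<^sub>L A \<supset> B"
  using assms
proof (induction rule: deriv.induct)
  case (hyp C)
  show ?case
  proof (cases "C = A")
    case True
    with hyp show ?thesis by (simp add: deriv_imp_self)
  next
    case False
    with hyp have "\<Gamma> \<turnstile>\<^sub>L C" and "C \<in> L" by (auto intro: deriv.hyp)
    with hyp.prems show ?thesis by (simp add: deriv_imp_weaken)
  qed
next
  case (ax1 C D)
  then show ?case by (simp add: deriv_imp_weaken deriv.ax1)
next
  case (ax2 C D E)
  then show ?case by (simp add: deriv_imp_weaken deriv.ax2)
next
  case (axP C D)
  then show ?case by (simp add: deriv_imp_weaken deriv.axP)
next
  case (mp C B)
  have "A \<in> L" and "C \<in> L" and "B \<in> L"
    using mp.prems deriv_in_L[OF mp.hyps(1)] deriv_in_L[OF mp.hyps(2)] by auto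
  then have "\<Gamma> \<turnstile>\<^sub>L (A \<supset> (C \<supset> B)) \<supset> ((A \<supset> C) \<supset> (A \<supset> B))"
    by (intro deriv.ax2)
  with mp.IH mp.prems show ?case by (metis deriv.mp)
qed

lemma deriv_cut: "{A} \<turnstile>\<^sub>L B \<Longrightarrow> A \<in> L \<Longrightarrow> \<Gamma> \<turnstile>\<^sub>L A \<Longrightarrow> \<Gamma> \<turnstile>\<^sub>L B"
  using deduction[of A "{}" B] deriv_mono[of "{}" "A \<supset> B" \<Gamma>] by (auto intro: deriv.mp)

definition interderivable :: "'v form \<Rightarrow> 'v form \<Rightarrow> bool" (infix "\<equiv>\<^sub>L" 50) where
  "A \<equiv>\<^sub>L B \<longleftrightarrow> {A} \<turnstile>\<^sub>L B \<and> {B} \<turnstile>\<^sub>L A"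

lemma interderivable_refl: "A \<equiv>\<^sub>L A"
  by (simp add: interderivable_def deriv.hyp)

lemma interderivable_sym: "A \<equiv>\<^sub>L B \<Longrightarrow> B \<equiv>\<^sub>L A"
  by (simp add: interderivable_def)

lemma interderivable_trans: "A \<equiv>\<^sub>L B \<Longrightarrow> B \<equiv>\<^sub>L C \<Longrightarrow> A \<in> L \<Longrightarrow> B \<in> L \<Longrightarrow> C \<in> L \<Longrightarrow> A \<equiv>\<^sub>L C"
  unfolding interderivable_def by (meson deriv_cut deriv.hyp singletonI)

lemma deriv_imp_congr:
  assumes "{A'} \<turnstile>\<^sub>L A" and "{B} \<turnstile>\<^sub>L B'" and "A \<in> L" "A' \<in> L" "B \<in> L" "B' \<in> L"
  shows "{A \<supset> B} \<turnstile>\<^sub>L A' \<supset> B'"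
proof (rule deduction)
  let ?\<Gamma> = "{A', A \<supset> B}"
  have "?\<Gamma> \<turnstile>\<^sub>L A"
    using assms(1,4) by (rule deriv_cut) (simp add: deriv.hyp)
  then have "?\<Gamma> \<turnstile>\<^sub>L B"
    by (rule deriv.mp) (simp add: deriv.hyp)
  with assms(2,5) show "?\<Gamma> \<turnstile>\<^sub>L B'"
    by (rule deriv_cut)
  show "?\<Gamma> \<subseteq> L"
    using assms by simp
qed

lemma interderivable_imp:
  "A \<equiv>\<^sub>L A' \<Longrightarrow> B \<equiv>\<^sub>L B' \<Longrightarrow> A \<in> L \<Longrightarrow> A' \<in> L \<Longrightarrow> B \<in> L \<Longrightarrow> B' \<in> L
    \<Longrightarrow> A \<supset> B \<equiv>\<^sub>L A' \<supset> B'"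
  unfolding interderivable_def by (auto intro: deriv_imp_congr)

text \<open>The paper's QQZ: relative double negation, with Q in the role of falsum.\<close>
abbreviation dneg :: "'v form \<Rightarrow> 'v form \<Rightarrow> 'v form" where
  "dneg Q Z \<equiv> (Z \<supset> Q) \<supset> Q"

lemma deriv_dneg_imp_of_imp_dneg:
  assumes L: "Q \<in> L" "X \<in> L" "Y \<in> L"
  shows "{dneg Q X \<supset> dneg Q Y} \<turnstile>\<^sub>L dneg Q (X \<supset> Y)"
proof -
  \<comment> \<open>The auxiliary hypothesis Q \<supset> Y turns X \<supset> Q into X \<supset> Y, which yields QQX;
    Peirce's law ((Q \<supset> Y) \<supset> Q) \<supset> Q discharges it at the end.\<close>
  let ?\<Gamma> = "{Q \<supset> Y, (X \<supset> Y) \<supset> Q, dneg Q X \<supset> dneg Q Y}"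
  have "insert X (insert (X \<supset> Q) ?\<Gamma>) \<turnstile>\<^sub>L Y"
    by (rule deriv.mp[of _ Q, OF deriv.mp[of _ X]]) (auto intro: deriv.hyp)
  then have "insert (X \<supset> Q) ?\<Gamma> \<turnstile>\<^sub>L X \<supset> Y"
    by (rule deduction) (use L in simp)
  then have "insert (X \<supset> Q) ?\<Gamma> \<turnstile>\<^sub>L Q"
    by (rule deriv.mp) (simp add: deriv.hyp)
  then have "?\<Gamma> \<turnstile>\<^sub>L dneg Q X"
    by (rule deduction) (use L in simp)
  then have dneg_Y: "?\<Gamma> \<turnstile>\<^sub>L dneg Q Y"
    by (rule deriv.mp) (simp add: deriv.hyp)
  have "insert X (insert Y ?\<Gamma>) \<turnstile>\<^sub>L Y"
    by (simp add: deriv.hyp)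
  then have "insert Y ?\<Gamma> \<turnstile>\<^sub>L X \<supset> Y"
    by (rule deduction) (use L in simp)
  then have "insert Y ?\<Gamma> \<turnstile>\<^sub>L Q"
    by (rule deriv.mp) (simp add: deriv.hyp)
  then have "?\<Gamma> \<turnstile>\<^sub>L Y \<supset> Q"
    by (rule deduction) (use L in simp)
  then have "?\<Gamma> \<turnstile>\<^sub>L Q"
    using dneg_Y by (rule deriv.mp)
  then have "{(X \<supset> Y) \<supset> Q, dneg Q X \<supset> dneg Q Y} \<turnstile>\<^sub>L (Q \<supset> Y) \<supset> Q"
    by (rule deduction) (use L in simp)
  then have "{(X \<supset> Y) \<supset> Q, dneg Q X \<supset> dneg Q Y} \<turnstile>\<^sub>L Q"
    by (rule deriv.mp) (use L in \<open>simp add: deriv.axP\<close>)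
  then show ?thesis
    by (rule deduction) (use L in simp)
qed

lemma deriv_imp_dneg_of_dneg_imp:
  assumes L: "Q \<in> L" "X \<in> L" "Y \<in> L"
  shows "{dneg Q (X \<supset> Y)} \<turnstile>\<^sub>L dneg Q X \<supset> dneg Q Y"
proof -
  let ?\<Gamma> = "{Y \<supset> Q, dneg Q X, dneg Q (X \<supset> Y)}"
  have "insert X (insert (X \<supset> Y) ?\<Gamma>) \<turnstile>\<^sub>L Q"
    by (rule deriv.mp[of _ Y, OF deriv.mp[of _ X]]) (auto intro: deriv.hyp)
  then have "insert (X \<supset> Y) ?\<Gamma> \<turnstile>\<^sub>L X \<supset> Q"
    by (rule deduction) (use L in simp)
  then have "insert (X \<supset> Y) ?\<Gamma> \<turnstile>\<^sub>L Q"
    by (rule deriv.mp) (simp add: deriv.hyp)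
  then have "?\<Gamma> \<turnstile>\<^sub>L (X \<supset> Y) \<supset> Q"
    by (rule deduction) (use L in simp)
  then have "?\<Gamma> \<turnstile>\<^sub>L Q"
    by (rule deriv.mp) (simp add: deriv.hyp)
  then have "{dneg Q X, dneg Q (X \<supset> Y)} \<turnstile>\<^sub>L dneg Q Y"
    by (rule deduction) (use L in simp)
  then show ?thesis
    by (rule deduction) (use L in simp)
qed

lemma dneg_imp_interderivable:
  "Q \<in> L \<Longrightarrow> X \<in> L \<Longrightarrow> Y \<in> L \<Longrightarrow> dneg Q (X \<supset> Y) \<equiv>\<^sub>L dneg Q X \<supset> dneg Q Y"
  by (simp add: interderivable_def deriv_dneg_imp_of_imp_dneg deriv_imp_dneg_of_dneg_imp)

lemma phi_in_L: "Q \<in> L \<Longrightarrow> Z \<in> L \<Longrightarrow> phi Q Z \<in> L"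
  by (induction Z) auto

lemma phi_interderivable_dneg:
  assumes Q: "Q \<in> L"
  shows "Z \<in> L \<Longrightarrow> phi Q Z \<equiv>\<^sub>L dneg Q Z"
proof (induction Z)
  case (Var p)
  show ?case by (simp add: interderivable_refl)
next
  case Falsum
  then show ?case by simp
next
  case (Imp X Y)
  then have X: "X \<in> L" and Y: "Y \<in> L" by simp_all
  with Imp.IH Q have "phi Q X \<supset> phi Q Y \<equiv>\<^sub>L dneg Q X \<supset> dneg Q Y"
    by (simp add: interderivable_imp phi_in_L)
  moreover have "dneg Q X \<supset> dneg Q Y \<equiv>\<^sub>L dneg Q (X \<supset> Y)"
    using dneg_imp_interderivable[OF Q X Y] by (rule interderivable_sym)
  ultimately show ?case
    using Q X Y by (simp add: interderivable_trans phi_in_L)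
qed

theorem theorem5:
  fixes Q Z :: "'v form"
  assumes "Q \<in> L" and "Z \<in> L"
  shows "{phi Q Z} \<turnstile>\<^sub>L (Z \<supset> Q) \<supset> Q \<and> {(Z \<supset> Q) \<supset> Q} \<turnstile>\<^sub>L phi Q Z"
  using phi_interderivable_dneg[OF assms] by (simp add: interderivable_def)

end
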